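(* Let $F$ be a field of characteristic zero, $n,m$ natural numbers, $1\le u\le n$ and $1\le j\le n+m$. Let $l=\sum c_{\alpha,\beta}e^{\alpha}x^{\beta}\partial_j$ be a nonzero element of $W(n,m)$ (finite sum, $c_{\alpha,\beta}\in F$) such that every $\alpha=(a_1,\dots,a_n)$ with some $c_{\alpha,\beta}\neq0$ has $a_u\neq0$. Then $[\partial_u,l]\neq0$.
   Context: $W(n,m)$ has basis $e^{\alpha}x^{\beta}\partial_i$ ($\alpha\in\mathbb Z^n$, $\beta\in\mathbb Z^{n+m}$, $1\le i\le n+m$), realized as vector fields $f\partial_i$ with $f$ in the commutative algebra with basis $e^{\alpha}x^{\beta}$ (multiplication adding exponents), $\partial_i(e^{\alpha}x^{\beta})=a_ie^{\alpha}x^{\beta}+b_ie^{\alpha}x^{\beta-\epsilon_i}$ with $a_i:=0$ for $i>n$, and bracket $[f\partial_i,g\partial_j]=f\partial_i(g)\partial_j-g\partial_j(f)\partial_i$. *)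

theory Defs
  imports Main
begin

text \<open>Monomials e^alpha x^beta, encoded by exponent vectors alpha, beta :: nat => int.
Indices are 0-based: alpha k for k < n, beta k for k < n+m; all other entries are 0.
An element of the algebra A is a finitely supported coefficient function mon => 'a.\<close>

type_synonym mon = "(nat \<Rightarrow> int) \<times> (nat \<Rightarrow> int)"

definition valid_mon :: "nat \<Rightarrow> nat \<Rightarrow> mon \<Rightarrow> bool" where
  "valid_mon n m \<mu> \<longleftrightarrow> (\<forall>k\<ge>n. fst \<mu> k = 0) \<and> (\<forall>k\<ge>n+m. snd \<mu> k = 0)"

definition supp_A :: "(mon \<Rightarrow> 'a::zero) \<Rightarrow> mon set" where
  "supp_A f = {\<mu>. f \<mu> \<noteq> 0}"

definition Alg :: "nat \<Rightarrow> nat \<Rightarrow> (mon \<Rightarrow> 'a::zero) set" where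
  "Alg n m = {f. finite (supp_A f) \<and> (\<forall>\<mu>\<in>supp_A f. valid_mon n m \<mu>)}"

definition mon_diff :: "mon \<Rightarrow> mon \<Rightarrow> mon" where
  "mon_diff \<mu> \<nu> = ((\<lambda>k. fst \<mu> k - fst \<nu> k), (\<lambda>k. snd \<mu> k - snd \<nu> k))"

definition A_mult :: "(mon \<Rightarrow> 'a::comm_ring_1) \<Rightarrow> (mon \<Rightarrow> 'a) \<Rightarrow> mon \<Rightarrow> 'a" where
  "A_mult f g \<mu> = (\<Sum>\<nu>\<in>supp_A f. f \<nu> * g (mon_diff \<mu> \<nu>))"

definition A_one :: "mon \<Rightarrow> 'a::{zero,one}" where
  "A_one \<mu> = (if \<mu> = ((\<lambda>_. 0), (\<lambda>_. 0)) then 1 else 0)"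

text \<open>Derivation partial_i (0-based i):
  partial_i (e^alpha x^beta) = a_i e^alpha x^beta + b_i e^alpha x^(beta - eps_i), with a_i = 0 for i >= n,
  extended linearly.\<close>
definition A_partial :: "nat \<Rightarrow> nat \<Rightarrow> (mon \<Rightarrow> 'a::comm_ring_1) \<Rightarrow> mon \<Rightarrow> 'a" where
  "A_partial n i f \<mu> =
     (if i < n then of_int (fst \<mu> i) else 0) * f \<mu>
     + of_int (snd \<mu> i + 1) * f (fst \<mu>, (snd \<mu>)(i := snd \<mu> i + 1))"

text \<open>Elements of W(n,m): X = sum_i X_i partial_i, encoded as i |-> X_i (coefficient in A), i < n+m.\<close>
definition Wnm :: "nat \<Rightarrow> nat \<Rightarrow> (nat \<Rightarrow> mon \<Rightarrow> 'a::zero) set" where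
  "Wnm n m = {X. (\<forall>i\<ge>n+m. X i = (\<lambda>_. 0)) \<and> (\<forall>i<n+m. X i \<in> Alg n m)}"

text \<open>Bracket: bilinear extension of [f d_i, g d_j] = f d_i(g) d_j - g d_j(f) d_i.\<close>
definition W_bracket :: "nat \<Rightarrow> nat \<Rightarrow> (nat \<Rightarrow> mon \<Rightarrow> 'a::comm_ring_1)
    \<Rightarrow> (nat \<Rightarrow> mon \<Rightarrow> 'a) \<Rightarrow> nat \<Rightarrow> mon \<Rightarrow> 'a" where
  "W_bracket n m X Y k \<mu> =
     (if k < n + m then
        (\<Sum>i<n+m. A_mult (X i) (A_partial n i (Y k)) \<mu> - A_mult (Y i) (A_partial n i (X k)) \<mu>)
      else 0)"

text \<open>The element f partial_j and the basis element partial_u = e^0 x^0 partial_u.\<close>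
definition W_single :: "nat \<Rightarrow> (mon \<Rightarrow> 'a::zero) \<Rightarrow> nat \<Rightarrow> mon \<Rightarrow> 'a" where
  "W_single j f = (\<lambda>i. if i = j then f else (\<lambda>_. 0))"

end

theory Submission
  imports Defs
begin

text \<open>Since \<open>\<partial>\<^sub>u\<close> has constant coefficient, \<open>[\<partial>\<^sub>u, f \<partial>\<^sub>j] = \<partial>\<^sub>u(f) \<partial>\<^sub>j\<close>. On a monomial,
  \<open>\<partial>\<^sub>u\<close> multiplies by \<open>a\<^sub>u\<close> and adds a term of lower \<open>x\<^sub>u\<close>-degree; hence at a monomial of \<open>f\<close>
  whose \<open>x\<^sub>u\<close>-exponent is maximal, the coefficient of \<open>\<partial>\<^sub>u(f)\<close> is \<open>a\<^sub>u\<close> times that of \<open>f\<close>,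
  which is nonzero in characteristic zero.\<close>

lemma supp_A_zero [simp]: "supp_A (\<lambda>_. 0::'a::zero) = {}"
  by (simp add: supp_A_def)

lemma supp_A_one: "supp_A (A_one :: mon \<Rightarrow> 'a::zero_neq_one) = {((\<lambda>_. 0), (\<lambda>_. 0))}"
  by (auto simp add: supp_A_def A_one_def)

lemma A_mult_zero_left [simp]: "A_mult (\<lambda>_. 0) g \<mu> = 0"
  by (simp add: A_mult_def)

lemma A_mult_zero_right [simp]: "A_mult f (\<lambda>_. 0) \<mu> = 0"
  by (simp add: A_mult_def)

lemma A_mult_one_left [simp]: "A_mult A_one g \<mu> = g \<mu>"
  by (simp add: A_mult_def supp_A_one A_one_def mon_diff_def)

lemma A_partial_zero [simp]: "A_partial n i ((\<lambda>_. 0) :: mon \<Rightarrow> 'a::comm_ring_1) = (\<lambda>_. 0)"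
  by (simp add: A_partial_def fun_eq_iff)

lemma A_partial_one [simp]: "A_partial n i (A_one :: mon \<Rightarrow> 'a::comm_ring_1) = (\<lambda>_. 0)"
proof
  fix \<mu> :: mon
  have "of_int (snd \<mu> i + 1) * (A_one (fst \<mu>, (snd \<mu>)(i := snd \<mu> i + 1)) :: 'a) = 0"
  proof (cases "snd \<mu> i + 1 = 0")
    case False
    then have "(snd \<mu>)(i := snd \<mu> i + 1) \<noteq> (\<lambda>_. 0)"
      by (metis fun_upd_same)
    then show ?thesis by (simp add: A_one_def)
  qed simp
  then show "A_partial n i A_one \<mu> = (0 :: 'a)"
    by (simp add: A_partial_def A_one_def)
qed

lemma W_single_eq_zero_iff: "W_single j f = (\<lambda>_ _. 0) \<longleftrightarrow> f = (\<lambda>_. 0)"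
  by (auto simp add: W_single_def fun_eq_iff)

lemma W_bracket_partial_single:
  assumes "u < n + m" and "j < n + m"
  shows "W_bracket n m (W_single u A_one) (W_single j f) = W_single j (A_partial n u f)"
proof (intro ext)
  fix k \<mu>
  have "A_mult (W_single u A_one i) (A_partial n i (W_single j f k)) \<mu>
          - A_mult (W_single j f i) (A_partial n i (W_single u A_one k)) \<mu>
        = (if k = j then (if i = u then A_partial n u f \<mu> else 0) else 0)" for i
    by (simp add: W_single_def)
  then show "W_bracket n m (W_single u A_one) (W_single j f) k \<mu> = W_single j (A_partial n u f) k \<mu>"
    using assms by (simp add: W_bracket_def) (simp add: W_single_def)
qed

lemma A_partial_at_max_degree:
  assumes "\<And>\<nu>. \<nu> \<in> supp_A f \<Longrightarrow> snd \<nu> i \<le> snd \<mu> i"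
  shows "A_partial n i f \<mu> = (if i < n then of_int (fst \<mu> i) else 0) * f \<mu>"
proof -
  have "f (fst \<mu>, (snd \<mu>)(i := snd \<mu> i + 1)) = 0"
    using assms[of "(fst \<mu>, (snd \<mu>)(i := snd \<mu> i + 1))"] by (force simp: supp_A_def)
  then show ?thesis by (simp add: A_partial_def)
qed

lemma A_partial_nonzero:
  fixes f :: "mon \<Rightarrow> 'a::{idom, ring_char_0}"
  assumes "u < n" and "finite (supp_A f)" and "f \<noteq> (\<lambda>_. 0)"
    and "\<forall>\<mu>\<in>supp_A f. fst \<mu> u \<noteq> 0"
  shows "A_partial n u f \<noteq> (\<lambda>_. 0)"
proof -
  let ?deg = "\<lambda>\<nu>. snd \<nu> u"
  have "supp_A f \<noteq> {}" using assms(3) by (auto simp: supp_A_def)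
  then have "Max (?deg ` supp_A f) \<in> ?deg ` supp_A f" using assms(2) by simp
  then obtain \<mu> where \<mu>: "\<mu> \<in> supp_A f" and "?deg \<mu> = Max (?deg ` supp_A f)" by auto
  then have deg_max: "\<And>\<nu>. \<nu> \<in> supp_A f \<Longrightarrow> snd \<nu> u \<le> snd \<mu> u" using assms(2) by simp
  have "A_partial n u f \<mu> = of_int (fst \<mu> u) * f \<mu>"
    using A_partial_at_max_degree[of f u \<mu> n] deg_max assms(1) by simp
  moreover have "f \<mu> \<noteq> 0" using \<mu> by (simp add: supp_A_def)
  moreover have "fst \<mu> u \<noteq> 0" using assms(4) \<mu> by blast
  ultimately show ?thesis by (metis mult_eq_0_iff of_int_eq_0_iff)
qed

theorem lemma3:
  fixes f :: "mon \<Rightarrow> 'a::field_char_0"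
    and n m u j :: nat
  assumes "u < n" and "j < n + m"
    and "f \<in> Alg n m"
    and "f \<noteq> (\<lambda>_. 0)"
    and "\<forall>\<mu>\<in>supp_A f. fst \<mu> u \<noteq> 0"
  shows "W_bracket n m (W_single u A_one) (W_single j f) \<noteq> (\<lambda>_ _. 0)"
proof -
  have "finite (supp_A f)" using assms(3) by (simp add: Alg_def)
  then have "A_partial n u f \<noteq> (\<lambda>_. 0)"
    using A_partial_nonzero assms(1,4,5) by blast
  moreover have "W_bracket n m (W_single u A_one) (W_single j f) = W_single j (A_partial n u f)"
    using assms(1,2) by (intro W_bracket_partial_single) simp_all
  ultimately show ?thesis by (simp add: W_single_eq_zero_iff)
qed

end
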